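(* For every integer $M$ there exists a graph $G$ with $\gamma_{\rm i}(G)-\mathrm{IR}(G)\ge M$.
   Context: For $S\subseteq V(G)$ and $x\in S$, a private neighbor of $x$ with respect to $S$ is a vertex of $N[S]\setminus N[S\setminus\{x\}]$, where $N[\cdot]$ denotes closed neighborhood; $S$ is irredundant if every vertex of $S$ has a private neighbor with respect to $S$, and $\mathrm{IR}(G)$ is the maximum size of a maximal irredundant set. Indicated domination game on $G$: two players, Dominator and Staller, alternate. In each round Dominator indicates a vertex $v$ not yet dominated by the vertices previously selected by Staller (a vertex dominates itself and its neighbors), and Staller must select a vertex of $N[v]$, adding it to a set $D$. The game ends when $D$ is a dominating set of $G$. Dominator wants to minimize $|D|$ and Staller to maximize it; the size of $D$ under optimal play of both is the indicated domination number $\gamma_{\rm i}(G)$. *)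

theory Defs
  imports Main
begin

definition simple_graph :: "'a set \<Rightarrow> ('a \<Rightarrow> 'a \<Rightarrow> bool) \<Rightarrow> bool" where
  "simple_graph V E \<longleftrightarrow> finite V \<and>
     (\<forall>x y. E x y \<longrightarrow> x \<in> V \<and> y \<in> V \<and> x \<noteq> y \<and> E y x)"

definition cnbhd :: "'a set \<Rightarrow> ('a \<Rightarrow> 'a \<Rightarrow> bool) \<Rightarrow> 'a set \<Rightarrow> 'a set" where
  "cnbhd V E S = {w \<in> V. \<exists>s\<in>S. w = s \<or> E s w}"

definition private_nbrs :: "'a set \<Rightarrow> ('a \<Rightarrow> 'a \<Rightarrow> bool) \<Rightarrow> 'a set \<Rightarrow> 'a \<Rightarrow> 'a set" where
  "private_nbrs V E S x = cnbhd V E S - cnbhd V E (S - {x})"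

definition irredundant :: "'a set \<Rightarrow> ('a \<Rightarrow> 'a \<Rightarrow> bool) \<Rightarrow> 'a set \<Rightarrow> bool" where
  "irredundant V E S \<longleftrightarrow> S \<subseteq> V \<and> (\<forall>x\<in>S. private_nbrs V E S x \<noteq> {})"

definition maximal_irredundant :: "'a set \<Rightarrow> ('a \<Rightarrow> 'a \<Rightarrow> bool) \<Rightarrow> 'a set \<Rightarrow> bool" where
  "maximal_irredundant V E S \<longleftrightarrow> irredundant V E S \<and>
     (\<forall>T. S \<subset> T \<and> T \<subseteq> V \<longrightarrow> \<not> irredundant V E T)"

definition upper_irredundance :: "'a set \<Rightarrow> ('a \<Rightarrow> 'a \<Rightarrow> bool) \<Rightarrow> nat" where
  "upper_irredundance V E = Max {card S | S. maximal_irredundant V E S}"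

definition dominates :: "'a set \<Rightarrow> ('a \<Rightarrow> 'a \<Rightarrow> bool) \<Rightarrow> 'a set \<Rightarrow> bool" where
  "dominates V E D \<longleftrightarrow> cnbhd V E D = V"

text \<open>Value of the indicated domination game from position D (the set of
  vertices selected by Staller so far), with a fuel bound k on the number of
  remaining rounds.  Every round adds a new vertex to D (a vertex of N[v] with v
  undominated is not in D), so the game lasts at most |V| rounds and fuel |V|
  from the empty position gives the exact optimal value.  Dominator (minimiser)
  indicates an undominated v, Staller (maximiser) selects u in N[v].\<close>
fun igame_val :: "'a set \<Rightarrow> ('a \<Rightarrow> 'a \<Rightarrow> bool) \<Rightarrow> nat \<Rightarrow> 'a set \<Rightarrow> nat" where
  "igame_val V E 0 D = 0"
| "igame_val V E (Suc k) D =
     (if dominates V E D then 0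
      else Min ((\<lambda>v. Max ((\<lambda>u. Suc (igame_val V E k (insert u D))) ` cnbhd V E {v}))
                ` (V - cnbhd V E D)))"

definition indicated_domination_number :: "'a set \<Rightarrow> ('a \<Rightarrow> 'a \<Rightarrow> bool) \<Rightarrow> nat" where
  "indicated_domination_number V E = igame_val V E (card V) {}"

end

theory Submission
  imports Defs
begin

text \<open>Take \<open>m\<close> disjoint copies of the 5-cycle. An irredundant set meets every copy
  in at most two vertices, since three vertices of \<open>C\<^sub>5\<close> never all have private
  neighbours; hence \<open>IR \<le> 2m\<close>. In the game, Staller can make every copy receive three
  selected vertices: while a copy contains at most one selected vertex and one of its
  vertices \<open>v\<close> is indicated, she can select a vertex of \<open>N[v]\<close> that leaves the copy
  undominated. Measured by the potential \<open>\<Sum> (3 - |D \<inter> copy|)\<close> over the undominated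
  copies, every round costs at most one, so \<open>\<gamma>\<^sub>i \<ge> 3m\<close>.\<close>

lemma cnbhd_subset: "cnbhd V E D \<subseteq> V"
  by (auto simp: cnbhd_def)

lemma cnbhd_insert: "cnbhd V E (insert u D) = cnbhd V E {u} \<union> cnbhd V E D"
  by (auto simp: cnbhd_def)

lemma mem_cnbhd_iff: "w \<in> cnbhd V E D \<longleftrightarrow> (\<exists>s\<in>D. w \<in> cnbhd V E {s})"
  by (auto simp: cnbhd_def)

lemma irredundant_private_nbr:
  assumes "irredundant V E S" "x \<in> S"
  obtains w where "w \<in> cnbhd V E {x}" "\<And>y. y \<in> S \<Longrightarrow> y \<noteq> x \<Longrightarrow> w \<notin> cnbhd V E {y}"
proof -
  obtain w where "w \<in> cnbhd V E S" and w_not: "w \<notin> cnbhd V E (S - {x})"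
    using assms unfolding irredundant_def private_nbrs_def by blast
  then have "w \<in> cnbhd V E {x}"
    by (metis Diff_iff empty_iff insert_iff mem_cnbhd_iff)
  moreover have "w \<notin> cnbhd V E {y}" if "y \<in> S" "y \<noteq> x" for y
    using w_not that mem_cnbhd_iff[of w V E "S - {x}"] by blast
  ultimately show ?thesis using that by blast
qed

lemma maximal_irredundant_exists:
  assumes "finite V"
  obtains S where "maximal_irredundant V E S"
proof -
  let ?I = "{S. irredundant V E S}"
  have "?I \<subseteq> Pow V" by (auto simp: irredundant_def)
  then have "finite ?I" using assms by (meson finite_Pow_iff finite_subset)
  moreover have "{} \<in> ?I" by (simp add: irredundant_def)
  ultimately obtain S where "S \<in> ?I" and S_max: "\<And>T. T \<in> ?I \<Longrightarrow> S \<subseteq> T \<Longrightarrow> S = T"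
    using finite_has_maximal[of ?I] by blast
  then have "maximal_irredundant V E S"
    unfolding maximal_irredundant_def by blast
  then show ?thesis using that by blast
qed

lemma upper_irredundance_le:
  assumes "finite V" and bound: "\<And>S. irredundant V E S \<Longrightarrow> card S \<le> n"
  shows "upper_irredundance V E \<le> n"
proof -
  let ?C = "{card S | S. maximal_irredundant V E S}"
  have "?C \<subseteq> card ` Pow V"
    unfolding maximal_irredundant_def irredundant_def by blast
  then have "finite ?C" using assms(1) by (meson finite_Pow_iff finite_imageI finite_subset)
  moreover have "?C \<noteq> {}"
    using maximal_irredundant_exists[OF assms(1)] by blast
  moreover have "\<forall>c\<in>?C. c \<le> n"
    using bound unfolding maximal_irredundant_def by blast
  ultimately show ?thesis unfolding upper_irredundance_def by simp
qed

lemma igame_val_ge_potential: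
  fixes \<phi> :: "'a set \<Rightarrow> nat"
  assumes fin: "finite V"
    and dom: "\<And>D. dominates V E D \<Longrightarrow> \<phi> D = 0"
    and step: "\<And>D v. v \<in> V - cnbhd V E D \<Longrightarrow> \<exists>u\<in>cnbhd V E {v}. \<phi> D \<le> Suc (\<phi> (insert u D))"
  shows "min k (\<phi> D) \<le> igame_val V E k D"
proof (induction k arbitrary: D)
  case 0
  then show ?case by simp
next
  case (Suc k)
  show ?case
  proof (cases "dominates V E D")
    case True
    then show ?thesis using dom by simp
  next
    case False
    let ?val = "\<lambda>v. Max ((\<lambda>u. Suc (igame_val V E k (insert u D))) ` cnbhd V E {v})"
    have "min (Suc k) (\<phi> D) \<le> ?val v" if v: "v \<in> V - cnbhd V E D" for v
    proof -
      obtain u where u: "u \<in> cnbhd V E {v}" and "\<phi> D \<le> Suc (\<phi> (insert u D))"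
        using step[OF v] by blast
      then have "min (Suc k) (\<phi> D) \<le> Suc (igame_val V E k (insert u D))"
        using Suc.IH[of "insert u D"] by linarith
      also have "\<dots> \<le> ?val v"
        using u fin cnbhd_subset[of V E "{v}"] by (intro Max_ge) (auto intro: finite_subset)
      finally show ?thesis .
    qed
    moreover have "V - cnbhd V E D \<noteq> {}"
      using False cnbhd_subset[of V E D] by (auto simp: dominates_def)
    ultimately show ?thesis using False fin by simp
  qed
qed

lemma indicated_domination_number_ge_potential:
  fixes \<phi> :: "'a set \<Rightarrow> nat"
  assumes "finite V"
    and "\<And>D. dominates V E D \<Longrightarrow> \<phi> D = 0"
    and "\<And>D v. v \<in> V - cnbhd V E D \<Longrightarrow> \<exists>u\<in>cnbhd V E {v}. \<phi> D \<le> Suc (\<phi> (insert u D))"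
  shows "min (card V) (\<phi> {}) \<le> indicated_domination_number V E"
  unfolding indicated_domination_number_def using igame_val_ge_potential[OF assms] .

definition cyc5_adj :: "nat \<Rightarrow> nat \<Rightarrow> bool" where
  "cyc5_adj p q \<longleftrightarrow> q = Suc p mod 5 \<or> p = Suc q mod 5"

definition cyc5_dom :: "nat \<Rightarrow> nat \<Rightarrow> bool" where
  "cyc5_dom p q \<longleftrightarrow> p = q \<or> cyc5_adj p q"

lemma cyc5_adj_irrefl: "\<not> cyc5_adj p p"
  by (simp add: cyc5_adj_def) presburger

lemma lessThan_5: "{..<5::nat} = {0, 1, 2, 3, 4}"
  by auto

lemma cyc5_no_private_triple:
  assumes "i < 5" "j < 5" "k < 5" "i \<noteq> j" "i \<noteq> k" "j \<noteq> k"
    and "\<exists>l<5. cyc5_dom i l \<and> \<not> cyc5_dom j l \<and> \<not> cyc5_dom k l"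
    and "\<exists>l<5. cyc5_dom j l \<and> \<not> cyc5_dom i l \<and> \<not> cyc5_dom k l"
    and "\<exists>l<5. cyc5_dom k l \<and> \<not> cyc5_dom i l \<and> \<not> cyc5_dom j l"
  shows False
proof -
  have "\<forall>i\<in>{..<5}. \<forall>j\<in>{..<5}. \<forall>k\<in>{..<5}. i \<noteq> j \<longrightarrow> i \<noteq> k \<longrightarrow> j \<noteq> k \<longrightarrow>
     \<not> ((\<exists>l\<in>{..<5}. cyc5_dom i l \<and> \<not> cyc5_dom j l \<and> \<not> cyc5_dom k l) \<and>
        (\<exists>l\<in>{..<5}. cyc5_dom j l \<and> \<not> cyc5_dom i l \<and> \<not> cyc5_dom k l) \<and>
        (\<exists>l\<in>{..<5}. cyc5_dom k l \<and> \<not> cyc5_dom i l \<and> \<not> cyc5_dom j l))"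
    unfolding lessThan_5 by (simp add: cyc5_dom_def cyc5_adj_def)
  then show False using assms by (simp add: Bex_def) blast
qed

lemma cyc5_staller_reply:
  assumes "i < 5" "j < 5" "\<not> cyc5_dom i j"
  obtains k l where "k < 5" "l < 5" "cyc5_dom j k" "\<not> cyc5_dom i l" "\<not> cyc5_dom k l"
proof -
  have "\<forall>i\<in>{..<5}. \<forall>j\<in>{..<5}. \<not> cyc5_dom i j \<longrightarrow>
     (\<exists>k\<in>{..<5}. \<exists>l\<in>{..<5}. cyc5_dom j k \<and> \<not> cyc5_dom i l \<and> \<not> cyc5_dom k l)"
    unfolding lessThan_5 by (simp add: cyc5_dom_def cyc5_adj_def)
  then show ?thesis using assms that by blast
qed

lemma cyc5_exists_undominating: "j < 5 \<Longrightarrow> \<exists>i<5. \<not> cyc5_dom i j"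
proof -
  have "\<forall>j\<in>{..<5}. \<exists>i\<in>{..<5}. \<not> cyc5_dom i j"
    unfolding lessThan_5 by (simp add: cyc5_dom_def cyc5_adj_def)
  then show "j < 5 \<Longrightarrow> \<exists>i<5. \<not> cyc5_dom i j" by blast
qed

text \<open>Vertex \<open>5 * b + i\<close> is vertex \<open>i\<close> of the \<open>b\<close>-th copy of \<open>C\<^sub>5\<close>, whose vertex set
  is \<open>block b\<close>.\<close>

definition mC5_vertices :: "nat \<Rightarrow> nat set" where
  "mC5_vertices m = {..<5 * m}"

definition mC5_adj :: "nat \<Rightarrow> nat \<Rightarrow> nat \<Rightarrow> bool" where
  "mC5_adj m x y \<longleftrightarrow> x div 5 < m \<and> x div 5 = y div 5 \<and> cyc5_adj (x mod 5) (y mod 5)"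

abbreviation mC5_cnbhd :: "nat \<Rightarrow> nat set \<Rightarrow> nat set" where
  "mC5_cnbhd m \<equiv> cnbhd (mC5_vertices m) (mC5_adj m)"

definition block :: "nat \<Rightarrow> nat set" where
  "block b = {5 * b..<5 * b + 5}"

lemma mem_block_iff: "x \<in> block b \<longleftrightarrow> x div 5 = b"
  unfolding block_def atLeastLessThan_iff by presburger

lemma finite_block: "finite (block b)"
  by (simp add: block_def)

lemma mem_mC5_vertices_iff: "x \<in> mC5_vertices m \<longleftrightarrow> x div 5 < m"
  by (simp add: mC5_vertices_def div_less_iff_less_mult mult.commute)

lemma block_subset_mC5_vertices: "b < m \<Longrightarrow> block b \<subseteq> mC5_vertices m"
  by (auto simp: mem_mC5_vertices_iff mem_block_iff)

lemma simple_graph_mC5: "simple_graph (mC5_vertices m) (mC5_adj m)"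
  unfolding simple_graph_def mem_mC5_vertices_iff mC5_adj_def
  using cyc5_adj_irrefl by (auto simp: mC5_vertices_def cyc5_adj_def)

lemma block_eq_mod_5_eq: "x \<in> block b \<Longrightarrow> y \<in> block b \<Longrightarrow> x mod 5 = y mod 5 \<Longrightarrow> x = y"
  by (metis div_mult_mod_eq mem_block_iff)

lemma mem_mC5_cnbhd_singleton:
  "w \<in> mC5_cnbhd m {x} \<longleftrightarrow> x div 5 < m \<and> w div 5 = x div 5 \<and> cyc5_dom (x mod 5) (w mod 5)"
proof -
  have "w = x \<longleftrightarrow> w div 5 = x div 5 \<and> x mod 5 = w mod 5"
    by (metis div_mult_mod_eq)
  then show ?thesis
    by (auto simp: cnbhd_def mem_mC5_vertices_iff mC5_adj_def cyc5_dom_def)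
qed

lemma mC5_cnbhd_singleton_subset_block: "mC5_cnbhd m {x} \<subseteq> block (x div 5)"
  by (auto simp: mem_mC5_cnbhd_singleton mem_block_iff)

lemma irredundant_mC5_block_card_le_2:
  assumes irr: "irredundant (mC5_vertices m) (mC5_adj m) S"
  shows "card (S \<inter> block b) \<le> 2"
proof (rule ccontr)
  have private_nbr:
    "\<exists>l<5. cyc5_dom (p mod 5) l \<and> \<not> cyc5_dom (q mod 5) l \<and> \<not> cyc5_dom (r mod 5) l"
    if p: "p \<in> S \<inter> block b" and q: "q \<in> S \<inter> block b" "q \<noteq> p"
      and r: "r \<in> S \<inter> block b" "r \<noteq> p" for p q r
  proof -
    obtain w where w: "w \<in> mC5_cnbhd m {p}"
      and w_not: "\<And>y. y \<in> S \<Longrightarrow> y \<noteq> p \<Longrightarrow> w \<notin> mC5_cnbhd m {y}"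
      using irredundant_private_nbr[OF irr] p by blast
    have "b < m" "w div 5 = b" "cyc5_dom (p mod 5) (w mod 5)"
      using w p by (simp_all add: mem_mC5_cnbhd_singleton mem_block_iff)
    moreover have "\<not> cyc5_dom (y mod 5) (w mod 5)" if "y \<in> S \<inter> block b" "y \<noteq> p" for y
      using w_not[of y] that \<open>b < m\<close> \<open>w div 5 = b\<close>
      by (simp add: mem_mC5_cnbhd_singleton mem_block_iff)
    ultimately show ?thesis
      using q r by (intro exI[of _ "w mod 5"]) simp
  qed
  assume "\<not> card (S \<inter> block b) \<le> 2"
  then have "3 \<le> card (S \<inter> block b)" by simp
  then obtain X where X: "X \<subseteq> S \<inter> block b" "card X = 3"
    by (rule obtain_subset_with_card_n)
  then obtain x y z where "X = {x, y, z}" and xyz: "x \<noteq> y" "x \<noteq> z" "y \<noteq> z"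
    unfolding card_3_iff by blast
  then have in_block: "x \<in> S \<inter> block b" "y \<in> S \<inter> block b" "z \<in> S \<inter> block b"
    using X(1) by auto
  then have "x mod 5 \<noteq> y mod 5" "x mod 5 \<noteq> z mod 5" "y mod 5 \<noteq> z mod 5"
    using xyz block_eq_mod_5_eq[of _ b] by blast+
  then show False
    using private_nbr[of x y z] private_nbr[of y x z] private_nbr[of z x y] in_block xyz
    by (intro cyc5_no_private_triple[of "x mod 5" "y mod 5" "z mod 5"]) auto
qed

lemma upper_irredundance_mC5_le: "upper_irredundance (mC5_vertices m) (mC5_adj m) \<le> 2 * m"
proof (rule upper_irredundance_le)
  fix S assume irr: "irredundant (mC5_vertices m) (mC5_adj m) S"
  then have "S \<subseteq> (\<Union>b<m. S \<inter> block b)"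
    by (auto simp: irredundant_def mem_mC5_vertices_iff mem_block_iff)
  then have "card S \<le> card (\<Union>b<m. S \<inter> block b)"
    by (rule card_mono[rotated]) (simp add: finite_block)
  also have "\<dots> \<le> (\<Sum>b<m. card (S \<inter> block b))"
    by (rule card_UN_le) simp
  also have "\<dots> \<le> (\<Sum>b<m. 2)"
    by (rule sum_mono) (rule irredundant_mC5_block_card_le_2[OF irr])
  finally show "card S \<le> 2 * m" by simp
qed (simp add: mC5_vertices_def)

definition block_deficit :: "nat \<Rightarrow> nat set \<Rightarrow> nat \<Rightarrow> nat" where
  "block_deficit m D b = (if block b \<subseteq> mC5_cnbhd m D then 0 else 3 - card (D \<inter> block b))"

definition staller_potential :: "nat \<Rightarrow> nat set \<Rightarrow> nat" where
  "staller_potential m D = (\<Sum>b<m. block_deficit m D b)"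

lemma block_deficit_insert_other_block:
  assumes "b \<noteq> u div 5"
  shows "block_deficit m (insert u D) b = block_deficit m D b"
proof -
  have "insert u D \<inter> block b = D \<inter> block b"
    using assms by (auto simp: mem_block_iff)
  moreover have "mC5_cnbhd m {u} \<inter> block b = {}"
    using assms mC5_cnbhd_singleton_subset_block[of m u] by (auto simp: mem_block_iff)
  then have "block b \<subseteq> mC5_cnbhd m (insert u D) \<longleftrightarrow> block b \<subseteq> mC5_cnbhd m D"
    by (auto simp: cnbhd_insert[of _ _ u D])
  ultimately show ?thesis
    by (simp add: block_deficit_def)
qed

lemma mC5_block_trace_undominating:
  assumes v: "v \<in> mC5_vertices m - mC5_cnbhd m D"
    and few: "card (D \<inter> block (v div 5)) \<le> 1"
  obtains i where "i < 5" "\<And>s. s \<in> D \<inter> block (v div 5) \<Longrightarrow> s mod 5 = i"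
    "\<not> cyc5_dom i (v mod 5)"
proof (cases "D \<inter> block (v div 5) = {}")
  case True
  then show ?thesis
    using cyc5_exists_undominating[of "v mod 5"] that by auto
next
  case False
  then obtain x where x: "x \<in> D \<inter> block (v div 5)" by blast
  then have single: "s = x" if "s \<in> D \<inter> block (v div 5)" for s
    using few x that by (auto simp: card_le_Suc0_iff_eq finite_block)
  have "v \<notin> mC5_cnbhd m {x}"
    using v x mem_cnbhd_iff[of v _ _ D] by blast
  moreover have "v div 5 < m"
    using v by (simp add: mem_mC5_vertices_iff)
  ultimately have "\<not> cyc5_dom (x mod 5) (v mod 5)"
    using x by (simp add: mem_mC5_cnbhd_singleton mem_block_iff)
  then show ?thesis
    using that[of "x mod 5"] single by auto
qed

lemma mC5_staller_keeps_block_undominated: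
  assumes v: "v \<in> mC5_vertices m - mC5_cnbhd m D"
    and few: "card (D \<inter> block (v div 5)) \<le> 1"
  obtains u where "u \<in> mC5_cnbhd m {v}" "\<not> block (v div 5) \<subseteq> mC5_cnbhd m (insert u D)"
proof -
  define b where "b = v div 5"
  obtain i where "i < 5" and trace: "\<And>s. s \<in> D \<inter> block b \<Longrightarrow> s mod 5 = i"
    and "\<not> cyc5_dom i (v mod 5)"
    using mC5_block_trace_undominating[OF v few] unfolding b_def by blast
  then obtain k l where "k < 5" "l < 5" "cyc5_dom (v mod 5) k" "\<not> cyc5_dom i l" "\<not> cyc5_dom k l"
    using cyc5_staller_reply[of i "v mod 5"] by auto
  define u where "u = 5 * b + k"
  define w where "w = 5 * b + l"
  have b: "b < m" using v by (simp add: b_def mem_mC5_vertices_iff)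
  have u: "u div 5 = b" "u mod 5 = k" and w: "w div 5 = b" "w mod 5 = l"
    using \<open>k < 5\<close> \<open>l < 5\<close> by (simp_all add: u_def w_def)
  have "u \<in> mC5_cnbhd m {v}"
    using b u \<open>cyc5_dom (v mod 5) k\<close> by (simp add: mem_mC5_cnbhd_singleton b_def)
  moreover have "w \<notin> mC5_cnbhd m {s}" if "s \<in> insert u D" for s
  proof (cases "s \<in> block b")
    case True
    then have "s mod 5 = k \<or> s mod 5 = i"
      using that u trace by auto
    then show ?thesis
      using w \<open>\<not> cyc5_dom i l\<close> \<open>\<not> cyc5_dom k l\<close> by (auto simp: mem_mC5_cnbhd_singleton)
  next
    case False
    then show ?thesis
      using w by (auto simp: mem_mC5_cnbhd_singleton mem_block_iff)
  qed
  then have "w \<notin> mC5_cnbhd m (insert u D)"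
    using mem_cnbhd_iff by metis
  moreover have "w \<in> block b"
    using w by (simp add: mem_block_iff)
  ultimately show ?thesis
    using that unfolding b_def by blast
qed

lemma block_deficit_step:
  assumes v: "v \<in> mC5_vertices m - mC5_cnbhd m D"
  obtains u where "u \<in> mC5_cnbhd m {v}" "u div 5 = v div 5"
    "block_deficit m D (v div 5) \<le> Suc (block_deficit m (insert u D) (v div 5))"
proof -
  define b where "b = v div 5"
  define c where "c = card (D \<inter> block b)"
  have v_N: "v \<in> mC5_cnbhd m {v}" and "v \<in> block b"
    using v by (simp_all add: mem_mC5_cnbhd_singleton mem_mC5_vertices_iff cyc5_dom_def
        mem_block_iff b_def)
  then have deficit: "block_deficit m D b = 3 - c"
    using v by (auto simp: block_deficit_def c_def)
  show ?thesis
  proof (cases "c \<le> 1")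
    case True
    then obtain u where u: "u \<in> mC5_cnbhd m {v}"
      and undom: "\<not> block b \<subseteq> mC5_cnbhd m (insert u D)"
      using mC5_staller_keeps_block_undominated[OF v] unfolding b_def c_def by blast
    have "u div 5 = b"
      using u by (simp add: mem_mC5_cnbhd_singleton b_def)
    have "card (insert u D \<inter> block b) \<le> card (insert u (D \<inter> block b))"
      by (intro card_mono) (auto simp: finite_block)
    also have "\<dots> \<le> Suc c"
      unfolding c_def by (rule card_insert_le_m1) (simp_all add: finite_block)
    finally have "block_deficit m D b \<le> Suc (block_deficit m (insert u D) b)"
      using deficit undom by (simp add: block_deficit_def)
    then show ?thesis
      using that u \<open>u div 5 = b\<close> unfolding b_def by blast
  next
    case False
    then show ?thesis
      using that[OF v_N] deficit unfolding b_def by simp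
  qed
qed

lemma staller_potential_step:
  assumes v: "v \<in> mC5_vertices m - mC5_cnbhd m D"
  shows "\<exists>u\<in>mC5_cnbhd m {v}. staller_potential m D \<le> Suc (staller_potential m (insert u D))"
proof -
  obtain u where u: "u \<in> mC5_cnbhd m {v}" "u div 5 = v div 5"
    and step: "block_deficit m D (v div 5) \<le> Suc (block_deficit m (insert u D) (v div 5))"
    using block_deficit_step[OF v] by blast
  have b: "v div 5 \<in> {..<m}"
    using v by (simp add: mem_mC5_vertices_iff)
  have "staller_potential m D =
      block_deficit m D (v div 5) + (\<Sum>b\<in>{..<m} - {v div 5}. block_deficit m D b)"
    unfolding staller_potential_def using b by (simp add: sum.remove)
  moreover have "staller_potential m (insert u D) =
      block_deficit m (insert u D) (v div 5) + (\<Sum>b\<in>{..<m} - {v div 5}. block_deficit m D b)"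
    unfolding staller_potential_def using b u(2)
    by (simp add: sum.remove block_deficit_insert_other_block)
  ultimately have "staller_potential m D \<le> Suc (staller_potential m (insert u D))"
    using step by linarith
  with u(1) show ?thesis by blast
qed

lemma staller_potential_dominating:
  assumes "dominates (mC5_vertices m) (mC5_adj m) D"
  shows "staller_potential m D = 0"
  using assms block_subset_mC5_vertices
  by (simp add: staller_potential_def block_deficit_def dominates_def)

lemma staller_potential_empty: "staller_potential m {} = 3 * m"
proof -
  have "block b \<noteq> {}" for b
    by (simp add: block_def)
  moreover have "mC5_cnbhd m {} = {}"
    by (simp add: cnbhd_def)
  ultimately show ?thesis
    by (simp add: staller_potential_def block_deficit_def)
qed

lemma indicated_domination_number_mC5_ge:
  "3 * m \<le> indicated_domination_number (mC5_vertices m) (mC5_adj m)"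
proof -
  have "finite (mC5_vertices m)" "card (mC5_vertices m) = 5 * m"
    by (simp_all add: mC5_vertices_def)
  then show ?thesis
    using indicated_domination_number_ge_potential[of _ _ "staller_potential m",
        OF _ staller_potential_dominating staller_potential_step]
    by (simp add: staller_potential_empty)
qed

theorem corollary6p3:
  fixes M :: int
  shows "\<exists>(V :: nat set) E. simple_graph V E \<and>
           int (indicated_domination_number V E) - int (upper_irredundance V E) \<ge> M"
proof -
  define m where "m = nat M"
  have "3 * m \<le> indicated_domination_number (mC5_vertices m) (mC5_adj m)"
    by (rule indicated_domination_number_mC5_ge)
  moreover have "upper_irredundance (mC5_vertices m) (mC5_adj m) \<le> 2 * m"
    by (rule upper_irredundance_mC5_le)
  ultimately have "M \<le> int (indicated_domination_number (mC5_vertices m) (mC5_adj m))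
      - int (upper_irredundance (mC5_vertices m) (mC5_adj m))"
    unfolding m_def by linarith
  then show ?thesis
    using simple_graph_mC5 by blast
qed

end
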